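(* For every finite set $\Omega$ with $|\Omega|\ge2$ and every $\varepsilon>0$ there exist $\delta>0$ and $n_0>0$ such that for all $n>n_0$ and all $\mu,\nu\in\mathcal P(\Omega^n)$: if $D_\square(\mu,\nu)<\delta$ then $\mathcal D_1(\mathcal O_\mu,\mathcal O_\nu)<\varepsilon$.
   Context: $\mathcal P(\mathcal X)$ denotes the set of probability measures on a finite set $\mathcal X$, identified with the standard simplex with the total variation norm $\|p-q\|_{TV}=\frac12\sum_x|p(x)-q(x)|$; $\mathcal P^2(\mathcal X)$ is the set of probability measures on $\mathcal P(\mathcal X)$, and $\mathcal D_1$ denotes the Wasserstein $\ell_1$-distance on $\mathcal P^2(\mathcal X)$ (with respect to the total variation distance on $\mathcal P(\mathcal X)$). The overlap of $\sigma,\tau\in\Omega^n$ is the distribution $\rho_{\sigma,\tau}\in\mathcal P(\Omega\times\Omega)$, $\rho_{\sigma,\tau}(\omega,\omega')=\frac1n\sum_{i=1}^n\mathbf 1\{\sigma_i=\omega,\tau_i=\omega'\}$; the overlap $\mathcal O_\mu\in\mathcal P^2(\Omega\times\Omega)$ of $\mu\in\mathcal P(\Omega^n)$ is the law of $\rho_{\sigma,\tau}$ where $\sigma,\tau$ are independent samples from $\mu$. For $\mu,\nu\in\mathcal P(\Omega^n)$ let $\Gamma(\mu,\nu)$ be the set of couplings, i.e. probability measures $\gamma$ on $\Omega^n\times\Omega^n$ whose first and second marginals are $\mu$ and $\nu$. The cut metric is $D_\square(\mu,\nu)=\frac1n\min_{\gamma\in\Gamma(\mu,\nu)}\max_{I\subset[n],\,B\subset\Omega^n\times\Omega^n,\,\omega\in\Omega}\Big|\sum_{i\in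 I}\sum_{(\sigma,\tau)\in B}\gamma(\sigma,\tau)\big(\mathbf 1\{\sigma_i=\omega\}-\mathbf 1\{\tau_i=\omega\}\big)\Big|$. *)

theory Defs
  imports "HOL-Probability.Probability"
begin

text \<open>Configurations in \<Omega>^n are lists of length n over a finite type 'a (playing \<Omega>).
  A probability measure on \<Omega>^n is a pmf on lists supported on lists of length n.\<close>

definition configs :: "nat \<Rightarrow> 'a list set" where
  "configs n = {xs. length xs = n}"

definition is_meas_on :: "nat \<Rightarrow> 'a list pmf \<Rightarrow> bool" where
  "is_meas_on n \<mu> \<longleftrightarrow> set_pmf \<mu> \<subseteq> configs n"

definition couplings :: "'b pmf \<Rightarrow> 'b pmf \<Rightarrow> ('b \<times> 'b) pmf set" where
  "couplings \<mu> \<nu> = {\<gamma>. map_pmf fst \<gamma> = \<mu> \<and> map_pmf snd \<gamma> = \<nu>}"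

text \<open>Cut metric (the minimum over couplings is attained; we write the infimum).\<close>
definition cut_dist :: "nat \<Rightarrow> ('a::finite) list pmf \<Rightarrow> 'a list pmf \<Rightarrow> real" where
  "cut_dist n \<mu> \<nu> = (1 / real n) *
     Inf ((\<lambda>\<gamma>. Max ((\<lambda>(I, B, \<omega>).
              \<bar>\<Sum>i\<in>I. \<Sum>z\<in>B. pmf \<gamma> z *
                 ((if fst z ! i = \<omega> then 1 else 0) - (if snd z ! i = \<omega> then 1 else 0))\<bar>)
           ` (Pow {..<n} \<times> Pow (configs n \<times> configs n) \<times> (UNIV :: 'a set))))
          ` couplings \<mu> \<nu>)"

definition overlap :: "nat \<Rightarrow> 'a list \<Rightarrow> 'a list \<Rightarrow> ('a \<times> 'a \<Rightarrow> real)" where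
  "overlap n \<sigma> \<tau> = (\<lambda>(w, w'). real (card {i. i < n \<and> \<sigma> ! i = w \<and> \<tau> ! i = w'}) / real n)"

definition overlap_law :: "nat \<Rightarrow> 'a list pmf \<Rightarrow> ('a \<times> 'a \<Rightarrow> real) pmf" where
  "overlap_law n \<mu> = map_pmf (\<lambda>(\<sigma>, \<tau>). overlap n \<sigma> \<tau>) (pair_pmf \<mu> \<mu>)"

definition tv_dist :: "('b::finite \<Rightarrow> real) \<Rightarrow> ('b \<Rightarrow> real) \<Rightarrow> real" where
  "tv_dist p q = (1/2) * (\<Sum>x\<in>UNIV. \<bar>p x - q x\<bar>)"

text \<open>Wasserstein-1 distance (w.r.t. TV) between (discrete) laws on P(X).
  Couplings of discrete measures are discrete, so couplings as pmfs suffice.\<close>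
definition W1 :: "('b::finite \<Rightarrow> real) pmf \<Rightarrow> ('b \<Rightarrow> real) pmf \<Rightarrow> real" where
  "W1 P Q = Inf ((\<lambda>\<pi>. measure_pmf.expectation \<pi> (\<lambda>(p, q). tv_dist p q)) ` couplings P Q)"

end

theory Submission
  imports Defs
begin

text \<open>A coupling \<gamma> of \<mu> and \<nu> that is good for the cut metric also couples the overlap laws:
  draw two independent samples (\<sigma>, \<tau>), (\<sigma>', \<tau>') from \<gamma> and compare the overlap of
  \<sigma>, \<sigma>' with that of \<tau>, \<tau>'. Entrywise, the difference of the two overlaps splits into a sum over
  the sites selected by one sample of the disagreements of the other sample, and each such sum is
  controlled by the cut metric once the selected set of sites is frozen. Hence the expected total
  variation between the overlaps is at most |\<Omega>|^2 times twice the cut distance.\<close>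

lemma finite_configs: "finite (configs n :: ('a::finite) list set)"
  unfolding configs_def using finite_lists_length_eq[of "UNIV::'a set" n] by simp

lemma set_pmf_coupling_subset:
  assumes "\<gamma> \<in> couplings \<mu> \<nu>" "is_meas_on n \<mu>" "is_meas_on n \<nu>"
  shows "set_pmf \<gamma> \<subseteq> configs n \<times> configs n"
proof
  fix z assume z: "z \<in> set_pmf \<gamma>"
  have "fst z \<in> set_pmf \<mu>" "snd z \<in> set_pmf \<nu>"
    using z assms(1) by (force simp: couplings_def)+
  then show "z \<in> configs n \<times> configs n"
    using assms(2,3) unfolding is_meas_on_def by (cases z) auto
qed

definition spin_diff :: "'a \<Rightarrow> 'a list \<times> 'a list \<Rightarrow> nat \<Rightarrow> real" where
  "spin_diff w z i = (if fst z ! i = w then 1 else 0) - (if snd z ! i = w then 1 else 0)"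

lemma overlap_eq_sum:
  "overlap n s t (w, w') =
     (1 / real n) * (\<Sum>i<n. (if s ! i = w then 1 else 0) * (if t ! i = w' then 1 else 0))"
proof -
  have "real (card {i. i < n \<and> s ! i = w \<and> t ! i = w'})
      = (\<Sum>i\<in>{i\<in>{..<n}. s ! i = w \<and> t ! i = w'}. (1::real))"
    by (simp add: conj_commute)
  also have "\<dots> = (\<Sum>i<n. (if s ! i = w then 1 else 0) * (if t ! i = w' then 1 else 0))"
    by (subst sum.inter_filter) (auto intro: sum.cong)
  finally show ?thesis unfolding overlap_def by simp
qed

text \<open>Summed over the sites, this is the identity
  1[\<sigma>=w]1[\<sigma>'=w'] - 1[\<tau>=w]1[\<tau>'=w'] = 1[\<sigma>'=w'](1[\<sigma>=w] - 1[\<tau>=w]) + 1[\<tau>=w](1[\<sigma>'=w'] - 1[\<tau>'=w']).\<close>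
lemma overlap_diff_eq:
  "overlap n (fst z\<^sub>1) (fst z\<^sub>2) (w, w') - overlap n (snd z\<^sub>1) (snd z\<^sub>2) (w, w') =
   (1 / real n) * ((\<Sum>i\<in>{i\<in>{..<n}. fst z\<^sub>2 ! i = w'}. spin_diff w z\<^sub>1 i)
                 + (\<Sum>i\<in>{i\<in>{..<n}. snd z\<^sub>1 ! i = w}. spin_diff w' z\<^sub>2 i))"
proof -
  have "(\<Sum>i\<in>{i\<in>{..<n}. fst z\<^sub>2 ! i = w'}. spin_diff w z\<^sub>1 i)
          + (\<Sum>i\<in>{i\<in>{..<n}. snd z\<^sub>1 ! i = w}. spin_diff w' z\<^sub>2 i)
      = (\<Sum>i<n. (if fst z\<^sub>2 ! i = w' then spin_diff w z\<^sub>1 i else 0)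
              + (if snd z\<^sub>1 ! i = w then spin_diff w' z\<^sub>2 i else 0))"
    by (simp only: sum.inter_filter[OF finite_lessThan] sum.distrib)
  also have "\<dots> = (\<Sum>i<n. (if fst z\<^sub>1 ! i = w then 1 else 0) * (if fst z\<^sub>2 ! i = w' then 1 else 0)
                        - (if snd z\<^sub>1 ! i = w then 1 else 0) * (if snd z\<^sub>2 ! i = w' then 1 else 0))"
    by (rule sum.cong) (auto simp: spin_diff_def)
  finally show ?thesis
    unfolding overlap_eq_sum by (simp add: sum_subtractf right_diff_distrib)
qed

lemma tv_dist_nonneg: "tv_dist p q \<ge> 0"
  unfolding tv_dist_def by (simp add: sum_nonneg)

lemma tv_dist_overlap_le:
  assumes "n > 0"
  shows "tv_dist (overlap n (fst z\<^sub>1) (fst z\<^sub>2)) (overlap n (snd z\<^sub>1) (snd z\<^sub>2))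
    \<le> (1 / (2 * real n)) * (\<Sum>(w, w')\<in>UNIV.
          \<bar>\<Sum>i\<in>{i\<in>{..<n}. fst z\<^sub>2 ! i = w'}. spin_diff w z\<^sub>1 i\<bar>
        + \<bar>\<Sum>i\<in>{i\<in>{..<n}. snd z\<^sub>1 ! i = w}. spin_diff w' z\<^sub>2 i\<bar>)"
    (is "_ \<le> _ * (\<Sum>(w, w')\<in>UNIV. ?D w w')")
proof -
  have "\<bar>overlap n (fst z\<^sub>1) (fst z\<^sub>2) (w, w') - overlap n (snd z\<^sub>1) (snd z\<^sub>2) (w, w')\<bar>
      \<le> (1 / real n) * ?D w w'" for w w'
    unfolding overlap_diff_eq using assms
    by (simp add: abs_mult) (rule divide_right_mono[OF abs_triangle_ineq], simp)
  then have "tv_dist (overlap n (fst z\<^sub>1) (fst z\<^sub>2)) (overlap n (snd z\<^sub>1) (snd z\<^sub>2))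
      \<le> (1 / 2) * (\<Sum>(w, w')\<in>UNIV. (1 / real n) * ?D w w')"
    unfolding tv_dist_def by (intro mult_left_mono sum_mono) (auto simp: split_beta)
  also have "\<dots> = (1 / (2 * real n)) * (\<Sum>(w, w')\<in>UNIV. ?D w w')"
    by (simp add: sum_distrib_left split_beta)
  finally show ?thesis .
qed

text \<open>Split C according to the sign of h.\<close>
lemma sum_abs_le_twice_subset_bound:
  fixes h :: "'b \<Rightarrow> real"
  assumes "finite C" and "\<And>z. p z \<ge> 0"
    and subset_bound: "\<And>B. B \<subseteq> C \<Longrightarrow> \<bar>\<Sum>z\<in>B. p z * h z\<bar> \<le> c"
  shows "(\<Sum>z\<in>C. p z * \<bar>h z\<bar>) \<le> 2 * c"
proof -
  define P where "P = {z\<in>C. h z \<ge> 0}"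
  define N where "N = {z\<in>C. h z < 0}"
  have "(\<Sum>z\<in>C. p z * \<bar>h z\<bar>) = (\<Sum>z\<in>P. p z * \<bar>h z\<bar>) + (\<Sum>z\<in>N. p z * \<bar>h z\<bar>)"
    using assms(1) unfolding P_def N_def by (subst sum.union_disjoint[symmetric]) (auto intro: sum.cong)
  also have "(\<Sum>z\<in>P. p z * \<bar>h z\<bar>) = (\<Sum>z\<in>P. p z * h z)"
    by (rule sum.cong) (auto simp: P_def)
  also have "(\<Sum>z\<in>N. p z * \<bar>h z\<bar>) = - (\<Sum>z\<in>N. p z * h z)"
    by (subst sum_negf[symmetric], rule sum.cong) (auto simp: N_def)
  also have "(\<Sum>z\<in>P. p z * h z) \<le> c" using subset_bound[of P] by (auto simp: P_def)
  also have "- (\<Sum>z\<in>N. p z * h z) \<le> c" using subset_bound[of N] by (auto simp: N_def)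
  finally show ?thesis by simp
qed

lemma sum_product_weights_le:
  assumes "\<And>z. p z \<ge> 0" and "(\<Sum>z\<in>C. p z) = 1"
    and inner: "\<And>z\<^sub>2. z\<^sub>2 \<in> C \<Longrightarrow> (\<Sum>z\<^sub>1\<in>C. p z\<^sub>1 * g z\<^sub>1 z\<^sub>2) \<le> (c::real)"
  shows "(\<Sum>z\<^sub>1\<in>C. \<Sum>z\<^sub>2\<in>C. p z\<^sub>1 * p z\<^sub>2 * g z\<^sub>1 z\<^sub>2) \<le> c"
proof -
  have "(\<Sum>z\<^sub>1\<in>C. \<Sum>z\<^sub>2\<in>C. p z\<^sub>1 * p z\<^sub>2 * g z\<^sub>1 z\<^sub>2) = (\<Sum>z\<^sub>2\<in>C. p z\<^sub>2 * (\<Sum>z\<^sub>1\<in>C. p z\<^sub>1 * g z\<^sub>1 z\<^sub>2))"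
    by (subst sum.swap) (simp add: sum_distrib_left mult_ac)
  also have "\<dots> \<le> (\<Sum>z\<^sub>2\<in>C. p z\<^sub>2 * c)"
    by (intro sum_mono mult_left_mono inner assms(1))
  also have "\<dots> = c" using assms(2) by (simp add: sum_distrib_right[symmetric])
  finally show ?thesis .
qed

lemma expectation_pair_pmf_eq_sum:
  fixes f :: "'b \<times> 'c \<Rightarrow> real"
  assumes "finite A" "finite B" "set_pmf p \<subseteq> A" "set_pmf q \<subseteq> B"
  shows "measure_pmf.expectation (pair_pmf p q) f = (\<Sum>x\<in>A. \<Sum>y\<in>B. pmf p x * pmf q y * f (x, y))"
proof -
  have "measure_pmf.expectation (pair_pmf p q) f = (\<Sum>z\<in>A \<times> B. pmf (pair_pmf p q) z *\<^sub>R f z)"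
    by (rule integral_measure_pmf) (use assms in auto)
  also have "\<dots> = (\<Sum>(x, y)\<in>A \<times> B. pmf p x * pmf q y * f (x, y))"
    by (rule sum.cong) (auto simp: pmf_pair)
  finally show ?thesis by (simp add: sum.cartesian_product)
qed

lemma W1_le_coupling_expectation:
  assumes "\<pi> \<in> couplings P Q"
  shows "W1 P Q \<le> measure_pmf.expectation \<pi> (\<lambda>(p, q). tv_dist p q)"
  unfolding W1_def
proof (rule cInf_lower)
  show "bdd_below ((\<lambda>\<pi>. measure_pmf.expectation \<pi> (\<lambda>(p, q). tv_dist p q)) ` couplings P Q)"
    by (rule bdd_belowI[where m=0])
       (auto intro!: Bochner_Integration.integral_nonneg simp: tv_dist_nonneg split: prod.splits)
qed (use assms in blast)

lemma overlap_law_coupling: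
  assumes "\<gamma> \<in> couplings \<mu> \<nu>"
  shows "map_pmf (\<lambda>(z\<^sub>1, z\<^sub>2). (overlap n (fst z\<^sub>1) (fst z\<^sub>2), overlap n (snd z\<^sub>1) (snd z\<^sub>2))) (pair_pmf \<gamma> \<gamma>)
           \<in> couplings (overlap_law n \<mu>) (overlap_law n \<nu>)"
proof -
  have "map_pmf fst \<gamma> = \<mu>" "map_pmf snd \<gamma> = \<nu>" using assms by (auto simp: couplings_def)
  then show ?thesis
    unfolding couplings_def overlap_law_def
    by (auto simp: map_pmf_comp map_pair[symmetric] case_prod_beta)
qed

lemma cut_dist_less_imp_coupling:
  fixes \<mu> \<nu> :: "('a::finite) list pmf"
  assumes "n > 0" and "cut_dist n \<mu> \<nu> < \<delta>"
  obtains \<gamma> where "\<gamma> \<in> couplings \<mu> \<nu>"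
    and "\<And>I B w. I \<subseteq> {..<n} \<Longrightarrow> B \<subseteq> configs n \<times> configs n \<Longrightarrow>
           \<bar>\<Sum>z\<in>B. pmf \<gamma> z * (\<Sum>i\<in>I. spin_diff w z i)\<bar> \<le> real n * \<delta>"
proof -
  define S where
    "S = Pow {..<n} \<times> Pow (configs n \<times> configs n :: ('a list \<times> 'a list) set) \<times> (UNIV :: 'a set)"
  define G where "G = (\<lambda>\<gamma>::('a list \<times> 'a list) pmf. Max ((\<lambda>(I, B, \<omega>).
     \<bar>\<Sum>i\<in>I. \<Sum>z\<in>B. pmf \<gamma> z * ((if fst z ! i = \<omega> then 1 else 0) - (if snd z ! i = \<omega> then 1 else 0))\<bar>) ` S))"
  have "Inf (G ` couplings \<mu> \<nu>) < real n * \<delta>"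
    using assms unfolding cut_dist_def G_def S_def by (simp add: field_simps)
  moreover have "pair_pmf \<mu> \<nu> \<in> couplings \<mu> \<nu>"
    unfolding couplings_def by (simp add: map_fst_pair_pmf map_snd_pair_pmf)
  ultimately obtain \<gamma> where \<gamma>: "\<gamma> \<in> couplings \<mu> \<nu>" and G\<gamma>: "G \<gamma> < real n * \<delta>"
    using cInf_lessD[of "G ` couplings \<mu> \<nu>"] by blast
  have "finite S" unfolding S_def by (simp add: finite_configs)
  have "\<bar>\<Sum>z\<in>B. pmf \<gamma> z * (\<Sum>i\<in>I. spin_diff w z i)\<bar> \<le> real n * \<delta>"
    if "I \<subseteq> {..<n}" "B \<subseteq> configs n \<times> configs n" for I B w
  proof -
    have "(\<Sum>z\<in>B. pmf \<gamma> z * (\<Sum>i\<in>I. spin_diff w z i)) = (\<Sum>i\<in>I. \<Sum>z\<in>B. pmf \<gamma> z *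
            ((if fst z ! i = w then 1 else 0) - (if snd z ! i = w then 1 else 0)))"
      by (subst sum.swap) (simp add: sum_distrib_left spin_diff_def)
    also have "\<bar>\<dots>\<bar> \<le> G \<gamma>" unfolding G_def
      by (rule Max_ge) (use \<open>finite S\<close> that in \<open>auto simp: S_def intro!: image_eqI[where x="(I, B, w)"]\<close>)
    finally show ?thesis using G\<gamma> by linarith
  qed
  with \<gamma> show thesis by (rule that)
qed

lemma W1_overlap_law_le:
  fixes \<gamma> :: "(('a::finite) list \<times> 'a list) pmf"
  assumes "n > 0" and \<gamma>: "\<gamma> \<in> couplings \<mu> \<nu>" and "finite C" and supp: "set_pmf \<gamma> \<subseteq> C"
    and disagreement: "\<And>I w. I \<subseteq> {..<n} \<Longrightarrow> (\<Sum>z\<in>C. pmf \<gamma> z * \<bar>\<Sum>i\<in>I. spin_diff w z i\<bar>) \<le> c"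
  shows "W1 (overlap_law n \<mu>) (overlap_law n \<nu>) \<le> real CARD('a \<times> 'a) * c / real n"
proof -
  define A :: "'a \<times> 'a \<Rightarrow> 'a list \<times> 'a list \<Rightarrow> 'a list \<times> 'a list \<Rightarrow> real"
    where "A = (\<lambda>(w, w') z\<^sub>1 z\<^sub>2. \<bar>\<Sum>i\<in>{i\<in>{..<n}. fst z\<^sub>2 ! i = w'}. spin_diff w z\<^sub>1 i\<bar>)"
  define B :: "'a \<times> 'a \<Rightarrow> 'a list \<times> 'a list \<Rightarrow> 'a list \<times> 'a list \<Rightarrow> real"
    where "B = (\<lambda>(w, w') z\<^sub>1 z\<^sub>2. \<bar>\<Sum>i\<in>{i\<in>{..<n}. snd z\<^sub>1 ! i = w}. spin_diff w' z\<^sub>2 i\<bar>)"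
  let ?p = "pmf \<gamma>"
  have total: "(\<Sum>z\<in>C. ?p z) = 1" by (rule sum_pmf_eq_1[OF \<open>finite C\<close> supp])
  have A_bound: "(\<Sum>z\<^sub>1\<in>C. \<Sum>z\<^sub>2\<in>C. ?p z\<^sub>1 * ?p z\<^sub>2 * A q z\<^sub>1 z\<^sub>2) \<le> c" for q
    by (rule sum_product_weights_le[OF pmf_nonneg total])
       (auto simp: A_def split: prod.splits intro: disagreement)
  have B_bound: "(\<Sum>z\<^sub>1\<in>C. \<Sum>z\<^sub>2\<in>C. ?p z\<^sub>1 * ?p z\<^sub>2 * B q z\<^sub>1 z\<^sub>2) \<le> c" for q
  proof -
    have "(\<Sum>z\<^sub>1\<in>C. \<Sum>z\<^sub>2\<in>C. ?p z\<^sub>1 * ?p z\<^sub>2 * B q z\<^sub>1 z\<^sub>2) = (\<Sum>z\<^sub>2\<in>C. \<Sum>z\<^sub>1\<in>C. ?p z\<^sub>2 * ?p z\<^sub>1 * B q z\<^sub>1 z\<^sub>2)"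
      by (subst sum.swap) (simp add: mult_ac)
    also have "\<dots> \<le> c"
      by (rule sum_product_weights_le[OF pmf_nonneg total])
         (auto simp: B_def split: prod.splits intro: disagreement)
    finally show ?thesis .
  qed
  let ?T = "\<lambda>z\<^sub>1 z\<^sub>2. tv_dist (overlap n (fst z\<^sub>1) (fst z\<^sub>2)) (overlap n (snd z\<^sub>1) (snd z\<^sub>2))"
  have "W1 (overlap_law n \<mu>) (overlap_law n \<nu>)
      \<le> measure_pmf.expectation (pair_pmf \<gamma> \<gamma>) (\<lambda>z. ?T (fst z) (snd z))"
    using W1_le_coupling_expectation[OF overlap_law_coupling[OF \<gamma>, of n]] by (simp add: case_prod_beta)
  also have "\<dots> = (\<Sum>z\<^sub>1\<in>C. \<Sum>z\<^sub>2\<in>C. ?p z\<^sub>1 * ?p z\<^sub>2 * ?T z\<^sub>1 z\<^sub>2)"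
    using \<open>finite C\<close> supp by (simp add: expectation_pair_pmf_eq_sum)
  also have "\<dots> \<le> (\<Sum>z\<^sub>1\<in>C. \<Sum>z\<^sub>2\<in>C. ?p z\<^sub>1 * ?p z\<^sub>2 *
                    ((1 / (2 * real n)) * (\<Sum>q\<in>UNIV. A q z\<^sub>1 z\<^sub>2 + B q z\<^sub>1 z\<^sub>2)))"
    using tv_dist_overlap_le[OF \<open>n > 0\<close>]
    by (intro sum_mono mult_left_mono) (auto simp: A_def B_def split_beta)
  also have "\<dots> = (1 / (2 * real n)) * (\<Sum>q\<in>UNIV.
                    (\<Sum>z\<^sub>1\<in>C. \<Sum>z\<^sub>2\<in>C. ?p z\<^sub>1 * ?p z\<^sub>2 * A q z\<^sub>1 z\<^sub>2)
                  + (\<Sum>z\<^sub>1\<in>C. \<Sum>z\<^sub>2\<in>C. ?p z\<^sub>1 * ?p z\<^sub>2 * B q z\<^sub>1 z\<^sub>2))"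
    by (simp only: sum_distrib_left distrib_left sum.distrib sum.swap[of _ _ UNIV]) (simp only: mult_ac)
  also have "\<dots> \<le> (1 / (2 * real n)) * (\<Sum>q\<in>(UNIV :: ('a \<times> 'a) set). 2 * c)"
  proof (intro mult_left_mono sum_mono)
    fix q
    show "(\<Sum>z\<^sub>1\<in>C. \<Sum>z\<^sub>2\<in>C. ?p z\<^sub>1 * ?p z\<^sub>2 * A q z\<^sub>1 z\<^sub>2)
        + (\<Sum>z\<^sub>1\<in>C. \<Sum>z\<^sub>2\<in>C. ?p z\<^sub>1 * ?p z\<^sub>2 * B q z\<^sub>1 z\<^sub>2) \<le> 2 * c"
      using A_bound[of q] B_bound[of q] by linarith
  qed simp
  also have "\<dots> = real CARD('a \<times> 'a) * c / real n"
    by simp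
  finally show ?thesis .
qed

lemma W1_overlap_law_le_cut_dist:
  fixes \<mu> \<nu> :: "('a::finite) list pmf"
  assumes "n > 0" "is_meas_on n \<mu>" "is_meas_on n \<nu>" "cut_dist n \<mu> \<nu> < \<delta>"
  shows "W1 (overlap_law n \<mu>) (overlap_law n \<nu>) \<le> 2 * real CARD('a \<times> 'a) * \<delta>"
proof -
  obtain \<gamma> where \<gamma>: "\<gamma> \<in> couplings \<mu> \<nu>"
    and cut: "\<And>I B w. I \<subseteq> {..<n} \<Longrightarrow> B \<subseteq> configs n \<times> configs n \<Longrightarrow>
                \<bar>\<Sum>z\<in>B. pmf \<gamma> z * (\<Sum>i\<in>I. spin_diff w z i)\<bar> \<le> real n * \<delta>"
    using cut_dist_less_imp_coupling[OF \<open>n > 0\<close> \<open>cut_dist n \<mu> \<nu> < \<delta>\<close>] by blast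
  have "(\<Sum>z\<in>configs n \<times> configs n. pmf \<gamma> z * \<bar>\<Sum>i\<in>I. spin_diff w z i\<bar>) \<le> 2 * (real n * \<delta>)"
    if "I \<subseteq> {..<n}" for I w
    by (rule sum_abs_le_twice_subset_bound) (use finite_configs cut that in auto)
  then have "W1 (overlap_law n \<mu>) (overlap_law n \<nu>) \<le> real CARD('a \<times> 'a) * (2 * (real n * \<delta>)) / real n"
    using assms(1) set_pmf_coupling_subset[OF \<gamma> assms(2,3)]
    by (intro W1_overlap_law_le[OF _ \<gamma>]) (auto simp: finite_configs)
  also have "\<dots> = 2 * real CARD('a \<times> 'a) * \<delta>" using assms(1) by simp
  finally show ?thesis .
qed

theorem corollary2p8:
  assumes "CARD('a::finite) \<ge> 2" and "(\<epsilon>::real) > 0"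
  shows "\<exists>\<delta>>0. \<exists>n0::nat>0. \<forall>n>n0. \<forall>\<mu> \<nu> :: 'a list pmf.
           is_meas_on n \<mu> \<longrightarrow> is_meas_on n \<nu> \<longrightarrow> cut_dist n \<mu> \<nu> < \<delta> \<longrightarrow>
           W1 (overlap_law n \<mu>) (overlap_law n \<nu>) < \<epsilon>"
proof (intro exI conjI allI impI)
  define K where "K = real CARD('a \<times> 'a)"
  have "K > 0" unfolding K_def by simp
  show "\<epsilon> / (4 * K) > 0" using \<open>K > 0\<close> assms(2) by simp
  fix n :: nat and \<mu> \<nu> :: "'a list pmf"
  assume "n > 1" "is_meas_on n \<mu>" "is_meas_on n \<nu>" "cut_dist n \<mu> \<nu> < \<epsilon> / (4 * K)"
  then have "W1 (overlap_law n \<mu>) (overlap_law n \<nu>) \<le> 2 * K * (\<epsilon> / (4 * K))"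
    unfolding K_def by (intro W1_overlap_law_le_cut_dist) auto
  also have "\<dots> < \<epsilon>" using \<open>K > 0\<close> assms(2) by simp
  finally show "W1 (overlap_law n \<mu>) (overlap_law n \<nu>) < \<epsilon>" .
qed (rule zero_less_one)

end
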